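(* Let $F$ be a finite forest each of whose connected components is a caterpillar with at least one edge. Then $F$ is odd-graceful.
   Context: A caterpillar is a tree with the property that removing all of its end vertices (leaves) leaves a path. A graph $G$ with $n$ edges is odd-graceful if there is an injective map $f:V(G)\to\{0,1,2,\dots,2n-1\}$ such that the set of induced edge weights $\{|f(x)-f(y)| : xy\in E(G)\}$ equals $\{1,3,5,\dots,2n-1\}$. *)

theory Defs
  imports Main
begin

definition simple_graph :: "'a set \<Rightarrow> 'a set set \<Rightarrow> bool" where
  "simple_graph V E \<longleftrightarrow> finite V \<and> (\<forall>e\<in>E. e \<subseteq> V \<and> card e = 2)"

definition adj :: "'a set set \<Rightarrow> 'a \<Rightarrow> 'a \<Rightarrow> bool" where
  "adj E x y \<longleftrightarrow> {x, y} \<in> E"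

definition degree :: "'a set set \<Rightarrow> 'a \<Rightarrow> nat" where
  "degree E v = card {e\<in>E. v \<in> e}"

definition reachable :: "'a set set \<Rightarrow> 'a \<Rightarrow> 'a \<Rightarrow> bool" where
  "reachable E x y \<longleftrightarrow> (x, y) \<in> {(u, v). adj E u v}\<^sup>*"

definition connected_graph :: "'a set \<Rightarrow> 'a set set \<Rightarrow> bool" where
  "connected_graph V E \<longleftrightarrow> (\<forall>x\<in>V. \<forall>y\<in>V. reachable E x y)"

definition has_cycle :: "'a set set \<Rightarrow> bool" where
  "has_cycle E \<longleftrightarrow> (\<exists>xs. length xs \<ge> 3 \<and> distinct xs \<and>
      (\<forall>i. Suc i < length xs \<longrightarrow> adj E (xs ! i) (xs ! Suc i)) \<and> adj E (last xs) (hd xs))"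

definition forest :: "'a set \<Rightarrow> 'a set set \<Rightarrow> bool" where
  "forest V E \<longleftrightarrow> simple_graph V E \<and> \<not> has_cycle E"

definition tree :: "'a set \<Rightarrow> 'a set set \<Rightarrow> bool" where
  "tree V E \<longleftrightarrow> forest V E \<and> connected_graph V E \<and> V \<noteq> {}"

text \<open>A path graph (the empty graph counts as a path with no vertices).\<close>
definition path_graph :: "'a set \<Rightarrow> 'a set set \<Rightarrow> bool" where
  "path_graph V E \<longleftrightarrow> (\<exists>xs. distinct xs \<and> set xs = V \<and>
      E = {{xs ! i, xs ! Suc i} | i. Suc i < length xs})"

definition remove_leaves :: "'a set \<Rightarrow> 'a set set \<Rightarrow> 'a set \<times> 'a set set" where
  "remove_leaves V E = (let V' = {v\<in>V. degree E v \<noteq> 1} in (V', {e\<in>E. e \<subseteq> V'}))"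

definition caterpillar :: "'a set \<Rightarrow> 'a set set \<Rightarrow> bool" where
  "caterpillar V E \<longleftrightarrow> tree V E \<and> (case remove_leaves V E of (V', E') \<Rightarrow> path_graph V' E')"

definition component :: "'a set \<Rightarrow> 'a set set \<Rightarrow> 'a \<Rightarrow> 'a set" where
  "component V E v = {u\<in>V. reachable E v u}"

definition induced_edges :: "'a set set \<Rightarrow> 'a set \<Rightarrow> 'a set set" where
  "induced_edges E C = {e\<in>E. e \<subseteq> C}"

definition odd_graceful :: "'a set \<Rightarrow> 'a set set \<Rightarrow> bool" where
  "odd_graceful V E \<longleftrightarrow> (\<exists>f :: 'a \<Rightarrow> nat.
      inj_on f V \<and> f ` V \<subseteq> {0..<2 * card E} \<and>
      {w. \<exists>x y. {x, y} \<in> E \<and> w = nat \<bar>int (f x) - int (f y)\<bar>}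
        = {k. odd k \<and> k < 2 * card E})"

end

theory Submission
  imports Defs
begin

text \<open>
  Call an odd-graceful labelling \<open>f\<close> of a graph with \<open>n\<close> edges an \<open>\<alpha>\<close>-labelling with
  threshold \<open>l\<close> if every edge joins a vertex labelled \<open>\<le> l\<close> to one labelled \<open>> l\<close>, and
  suppose that the labels \<open>l\<close> and \<open>l + 1\<close> sit on vertices \<open>a\<close> and \<open>b\<close>. A new leaf \<open>x\<close>
  can be hung at \<open>a\<close>: raise every label above \<open>l\<close> by 2 and give \<open>x\<close> the label \<open>l + 1\<close>.
  All old weights grow by 2 and the new edge gets weight 1, and now \<open>a\<close>, \<open>x\<close> carry the two
  middle labels. The reflection \<open>f \<mapsto> 2n - 1 - f\<close> exchanges the roles of the two middle
  vertices, so a leaf may equally be hung at \<open>b\<close>. Walking along the spine of a caterpillar,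
  hanging all legs of a spine vertex before stepping to the next one, therefore yields such a
  labelling for every caterpillar with an edge.

  Components are then combined one at a time: if a component has such a labelling with
  threshold \<open>l\<close> and the rest of the forest is odd-graceful with \<open>n\<close> edges, raise the upper
  labels of the component by \<open>2n\<close> and shift the rest by \<open>l + 1\<close> into the gap. The weights of
  the component become \<open>2n + 1, 2n + 3, \<dots>\<close> while those of the rest stay \<open>1, 3, \<dots>, 2n - 1\<close>.
\<close>

section \<open>Edge weights\<close>

definition edge_weights :: "('a \<Rightarrow> nat) \<Rightarrow> 'a set set \<Rightarrow> nat set" where
  "edge_weights f E = {w. \<exists>x y. {x, y} \<in> E \<and> w = nat \<bar>int (f x) - int (f y)\<bar>}"

definition odd_graceful_labelling :: "'a set \<Rightarrow> 'a set set \<Rightarrow> ('a \<Rightarrow> nat) \<Rightarrow> bool" where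
  "odd_graceful_labelling V E f \<longleftrightarrow> inj_on f V \<and> f ` V \<subseteq> {0..<2 * card E} \<and>
     edge_weights f E = {k. odd k \<and> k < 2 * card E}"

lemma odd_graceful_iff_labelling: "odd_graceful V E \<longleftrightarrow> (\<exists>f. odd_graceful_labelling V E f)"
  unfolding odd_graceful_def odd_graceful_labelling_def edge_weights_def ..

lemma odds_shift_Un:
  "(\<lambda>w. w + 2 * n) ` {k::nat. odd k \<and> k < 2 * m} \<union> {k. odd k \<and> k < 2 * n}
     = {k. odd k \<and> k < 2 * (m + n)}"
proof (intro set_eqI iffI)
  fix k assume k: "k \<in> {k. odd k \<and> k < 2 * (m + n)}"
  show "k \<in> (\<lambda>w. w + 2 * n) ` {k. odd k \<and> k < 2 * m} \<union> {k. odd k \<and> k < 2 * n}"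
  proof (cases "k < 2 * n")
    case False
    then have "k - 2 * n \<in> {k. odd k \<and> k < 2 * m}" "k = k - 2 * n + 2 * n" using k by auto
    then show ?thesis by blast
  qed (use k in simp)
qed auto

lemma edge_weights_empty [simp]: "edge_weights f {} = {}"
  unfolding edge_weights_def by simp

lemma edge_weights_Un: "edge_weights f (A \<union> B) = edge_weights f A \<union> edge_weights f B"
  unfolding edge_weights_def by auto

lemma edge_weights_insert:
  "edge_weights f (insert {x, y} E) = insert (nat \<bar>int (f x) - int (f y)\<bar>) (edge_weights f E)"
  unfolding edge_weights_def by (auto simp: doubleton_eq_iff abs_minus_commute)

lemma edge_weights_cong:
  assumes "\<And>e. e \<in> E \<Longrightarrow> e \<subseteq> V" "\<And>v. v \<in> V \<Longrightarrow> g v = h v"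
  shows "edge_weights g E = edge_weights h E"
  unfolding edge_weights_def using assms by (intro Collect_cong) (metis insert_subset)

lemma edge_weights_add_const: "edge_weights (\<lambda>v. f v + c) E = edge_weights f E"
  unfolding edge_weights_def by simp

lemma edge_weights_reflect:
  assumes "\<And>e. e \<in> E \<Longrightarrow> e \<subseteq> V" "\<And>v. v \<in> V \<Longrightarrow> f v < N"
  shows "edge_weights (\<lambda>v. N - Suc (f v)) E = edge_weights f E"
proof -
  have reflect: "nat \<bar>int (N - Suc (f x)) - int (N - Suc (f y))\<bar> = nat \<bar>int (f x) - int (f y)\<bar>"
    if "{x, y} \<in> E" for x y
    using assms(2)[of x] assms(2)[of y] assms(1)[OF that] by (simp add: nat_abs_int_diff)
  show ?thesis
    unfolding edge_weights_def by (simp add: reflect cong: conj_cong)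
qed

definition separated_at :: "'a set set \<Rightarrow> ('a \<Rightarrow> nat) \<Rightarrow> nat \<Rightarrow> bool" where
  "separated_at E f l \<longleftrightarrow> (\<forall>e\<in>E. \<exists>x y. e = {x, y} \<and> f x \<le> l \<and> l < f y)"

lemma separated_atE:
  assumes "separated_at E f l" "e \<in> E"
  obtains x y where "e = {x, y}" "f x \<le> l" "l < f y"
  using assms unfolding separated_at_def by blast

lemma edge_weights_raise:
  assumes "separated_at E f l"
  shows "edge_weights (\<lambda>v. if f v \<le> l then f v else f v + c) E = (\<lambda>w. w + c) ` edge_weights f E"
proof -
  define r where "r = (\<lambda>v. if f v \<le> l then f v else f v + c)"
  have raise: "nat \<bar>int (r x) - int (r y)\<bar> = nat \<bar>int (f x) - int (f y)\<bar> + c"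
    if xy: "{x, y} \<in> E" for x y
  proof -
    obtain x' y' where xy': "{x, y} = {x', y'}" and "f x' \<le> l" "l < f y'"
      by (rule separated_atE[OF assms xy])
    then have "r x' = f x'" "r y' = f y' + c" "f x' < f y'" by (auto simp: r_def)
    moreover have "(x = x' \<and> y = y') \<or> (x = y' \<and> y = x')"
      using xy' by (simp add: doubleton_eq_iff)
    ultimately show ?thesis by (auto simp: nat_abs_int_diff)
  qed
  have "edge_weights r E = (\<lambda>w. w + c) ` edge_weights f E"
  proof (intro set_eqI iffI)
    fix w assume "w \<in> edge_weights r E"
    then obtain x y where xy: "{x, y} \<in> E" "w = nat \<bar>int (r x) - int (r y)\<bar>"
      unfolding edge_weights_def by blast
    then have "w = nat \<bar>int (f x) - int (f y)\<bar> + c" using raise by simp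
    moreover have "nat \<bar>int (f x) - int (f y)\<bar> \<in> edge_weights f E"
      using xy(1) unfolding edge_weights_def by blast
    ultimately show "w \<in> (\<lambda>w. w + c) ` edge_weights f E" by blast
  next
    fix w assume "w \<in> (\<lambda>w. w + c) ` edge_weights f E"
    then obtain x y where xy: "{x, y} \<in> E" "w = nat \<bar>int (f x) - int (f y)\<bar> + c"
      unfolding edge_weights_def by blast
    then have "w = nat \<bar>int (r x) - int (r y)\<bar>" using raise by simp
    then show "w \<in> edge_weights r E" using xy(1) unfolding edge_weights_def by blast
  qed
  then show ?thesis unfolding r_def .
qed

section \<open>Growing odd-graceful \<open>\<alpha>\<close>-labellings by leaves\<close>

definition odd_alpha_pair :: "'a set \<Rightarrow> 'a set set \<Rightarrow> 'a \<Rightarrow> 'a \<Rightarrow> bool" where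
  "odd_alpha_pair V E a b \<longleftrightarrow> finite E \<and> (\<forall>e\<in>E. e \<subseteq> V) \<and> a \<in> V \<and> b \<in> V \<and>
     (\<exists>f l. odd_graceful_labelling V E f \<and> separated_at E f l \<and> f a = l \<and> f b = Suc l)"

lemma odd_alpha_pair_swap:
  assumes "odd_alpha_pair V E a b"
  shows "odd_alpha_pair V E b a"
proof -
  obtain f l where fin: "finite E" and sub: "\<forall>e\<in>E. e \<subseteq> V" and "a \<in> V" "b \<in> V"
    and lab: "odd_graceful_labelling V E f" and sep: "separated_at E f l"
    and fa: "f a = l" and fb: "f b = Suc l"
    using assms unfolding odd_alpha_pair_def by blast
  define N where "N = 2 * card E"
  define g where "g = (\<lambda>v. N - Suc (f v))"
  have below: "f v < N" if "v \<in> V" for v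
    using lab that unfolding odd_graceful_labelling_def N_def by auto
  have "Suc l < N" using below[OF \<open>b \<in> V\<close>] fb by simp
  have "inj_on g V"
  proof (rule inj_onI)
    fix u v assume "u \<in> V" "v \<in> V" "g u = g v"
    then have "f u = f v" using below[of u] below[of v] unfolding g_def by simp
    then show "u = v" using lab \<open>u \<in> V\<close> \<open>v \<in> V\<close>
      unfolding odd_graceful_labelling_def inj_on_def by blast
  qed
  moreover have "g ` V \<subseteq> {0..<2 * card E}"
  proof -
    have "g v < N" if "v \<in> V" for v using below[OF that] unfolding g_def by simp
    then show ?thesis unfolding N_def by auto
  qed
  moreover have "edge_weights g E = {k. odd k \<and> k < 2 * card E}"
    using lab edge_weights_reflect[of E V f N] sub below
    unfolding odd_graceful_labelling_def g_def by blast
  moreover have "separated_at E g (N - Suc (Suc l))"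
    unfolding separated_at_def
  proof
    fix e assume "e \<in> E"
    then obtain x y where "e = {x, y}" "f x \<le> l" "l < f y"
      by (rule separated_atE[OF sep])
    moreover have "f x < N" "f y < N" using \<open>e \<in> E\<close> sub below calculation(1) by auto
    ultimately show "\<exists>x y. e = {x, y} \<and> g x \<le> N - Suc (Suc l) \<and> N - Suc (Suc l) < g y"
      unfolding g_def by (intro exI[of _ y] exI[of _ x]) auto
  qed
  moreover have "g b = N - Suc (Suc l)" "g a = Suc (N - Suc (Suc l))"
    using fa fb \<open>Suc l < N\<close> unfolding g_def by auto
  ultimately show ?thesis
    unfolding odd_alpha_pair_def odd_graceful_labelling_def
    using fin sub \<open>a \<in> V\<close> \<open>b \<in> V\<close> by blast
qed

lemma odd_alpha_pair_attach:
  assumes "odd_alpha_pair V E a b" "x \<notin> V"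
  shows "odd_alpha_pair (insert x V) (insert {a, x} E) a x"
proof -
  obtain f l where fin: "finite E" and sub: "\<forall>e\<in>E. e \<subseteq> V" and "a \<in> V" "b \<in> V"
    and inj: "inj_on f V" and rng: "f ` V \<subseteq> {0..<2 * card E}"
    and w: "edge_weights f E = {k. odd k \<and> k < 2 * card E}" and sep: "separated_at E f l"
    and fa: "f a = l" and fb: "f b = Suc l"
    using assms(1) unfolding odd_alpha_pair_def odd_graceful_labelling_def by blast
  define g where "g = (\<lambda>v. if v = x then Suc l else if f v \<le> l then f v else f v + 2)"
  have "{a, x} \<notin> E" using sub assms(2) by blast
  then have card: "card (insert {a, x} E) = Suc (card E)" using fin by simp
  have "Suc l < 2 * card E" using rng \<open>b \<in> V\<close> fb by auto
  have ga: "g a = l" and gx: "g x = Suc l" using \<open>a \<in> V\<close> assms(2) fa unfolding g_def by auto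
  have "inj_on g (insert x V)"
    using inj assms(2) unfolding g_def inj_on_def by auto
  moreover have "g ` insert x V \<subseteq> {0..<2 * card (insert {a, x} E)}"
    using rng \<open>Suc l < 2 * card E\<close> unfolding card g_def by auto
  moreover have "separated_at (insert {a, x} E) g l"
    unfolding separated_at_def
  proof
    fix e assume "e \<in> insert {a, x} E"
    then consider "e = {a, x}" | "e \<in> E" by blast
    then show "\<exists>u v. e = {u, v} \<and> g u \<le> l \<and> l < g v"
    proof cases
      case 1
      then show ?thesis using ga gx by (intro exI[of _ a] exI[of _ x]) simp
    next
      case 2
      then obtain u v where "e = {u, v}" "f u \<le> l" "l < f v"
        by (rule separated_atE[OF sep])
      moreover have "u \<noteq> x" "v \<noteq> x" using 2 sub assms(2) calculation(1) by auto
      ultimately show ?thesis unfolding g_def by (intro exI[of _ u] exI[of _ v]) auto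
    qed
  qed
  moreover have "edge_weights g (insert {a, x} E) = {k. odd k \<and> k < 2 * card (insert {a, x} E)}"
  proof -
    have "edge_weights g E = edge_weights (\<lambda>v. if f v \<le> l then f v else f v + 2) E"
      using sub assms(2) by (intro edge_weights_cong[of E V]) (auto simp: g_def)
    also have "\<dots> = (\<lambda>w. w + 2) ` {k. odd k \<and> k < 2 * card E}"
      using edge_weights_raise[OF sep] w by simp
    finally have shifted: "edge_weights g E = (\<lambda>w. w + 2 * 1) ` {k. odd k \<and> k < 2 * card E}"
      by simp
    have "edge_weights g (insert {a, x} E) = edge_weights g E \<union> {1}"
      using ga gx by (simp add: edge_weights_insert)
    also have "{1} = {k::nat. odd k \<and> k < 2 * 1}" by (auto elim!: oddE)
    also have "edge_weights g E \<union> \<dots> = {k. odd k \<and> k < 2 * (card E + 1)}"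
      unfolding shifted by (rule odds_shift_Un)
    finally show ?thesis unfolding card by simp
  qed
  ultimately show ?thesis
    unfolding odd_alpha_pair_def odd_graceful_labelling_def
    using fin sub \<open>a \<in> V\<close> ga gx by blast
qed

lemma odd_alpha_pair_edge:
  assumes "a \<noteq> b"
  shows "odd_alpha_pair {a, b} {{a, b}} a b"
proof -
  define f where "f = (\<lambda>v. if v = a then 0 else 1 :: nat)"
  have "edge_weights f {{a, b}} = {k. odd k \<and> k < 2 * card {{a, b}}}"
    using assms by (auto simp: edge_weights_insert f_def elim!: oddE)
  moreover have "separated_at {{a, b}} f 0"
    using assms unfolding separated_at_def f_def by auto
  ultimately show ?thesis
    using assms unfolding odd_alpha_pair_def odd_graceful_labelling_def
    by (intro conjI exI[of _ f] exI[of _ 0]) (auto simp: f_def inj_on_def)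
qed

text \<open>The one-vertex graph is the seed of the construction; it has no odd-graceful labelling
  with two middle labels, since it has no labels at all.\<close>

definition extendable_at :: "'a set \<Rightarrow> 'a set set \<Rightarrow> 'a \<Rightarrow> bool" where
  "extendable_at V E c \<longleftrightarrow> (V = {c} \<and> E = {}) \<or> (\<exists>w. odd_alpha_pair V E c w)"

lemma odd_alpha_pair_extendable_at:
  assumes "odd_alpha_pair V E a b"
  shows "extendable_at V E a" "extendable_at V E b"
  using assms odd_alpha_pair_swap[OF assms] unfolding extendable_at_def by blast+

lemma extendable_at_attach:
  assumes "extendable_at V E c" "x \<notin> V"
  shows "odd_alpha_pair (insert x V) (insert {c, x} E) c x"
  using assms odd_alpha_pair_edge[of c x] odd_alpha_pair_attach[of V E c _ x]
  unfolding extendable_at_def by (auto simp: insert_commute)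

lemma extendable_at_attach_leaves:
  assumes "finite L" "extendable_at V E c" "L \<inter> V = {}"
  shows "extendable_at (V \<union> L) (E \<union> (\<lambda>l. {c, l}) ` L) c"
  using assms
proof (induction L rule: finite_induct)
  case empty
  then show ?case by simp
next
  case (insert x L)
  then have "odd_alpha_pair (insert x (V \<union> L)) (insert {c, x} (E \<union> (\<lambda>l. {c, l}) ` L)) c x"
    by (intro extendable_at_attach) auto
  then show ?case by (simp add: odd_alpha_pair_extendable_at)
qed

section \<open>Caterpillars\<close>

definition path_edges :: "'a list \<Rightarrow> 'a set set" where
  "path_edges xs = {{xs ! i, xs ! Suc i} | i. Suc i < length xs}"

lemma path_edges_single [simp]: "path_edges [x] = {}"
  unfolding path_edges_def by simp

lemma path_edges_Cons_Cons: "path_edges (x # y # ys) = insert {x, y} (path_edges (y # ys))"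
proof -
  have "{i. Suc i < length (x # y # ys)} = insert 0 (Suc ` {i. Suc i < length (y # ys)})"
    by (auto simp: image_iff less_Suc_eq_0_disj)
  then show ?thesis
    unfolding path_edges_def setcompr_eq_image by (simp add: image_image)
qed

definition leaf_edges :: "'a set \<Rightarrow> ('a \<Rightarrow> 'a set) \<Rightarrow> 'a set set" where
  "leaf_edges S L = {{s, l} | s l. s \<in> S \<and> l \<in> L s}"

lemma leaf_edges_empty [simp]: "leaf_edges {} L = {}"
  unfolding leaf_edges_def by simp

lemma leaf_edges_insert: "leaf_edges (insert s S) L = (\<lambda>l. {s, l}) ` L s \<union> leaf_edges S L"
  unfolding leaf_edges_def by blast

lemma extendable_at_spine:
  assumes "extendable_at V E c" "distinct (c # ys)" "\<forall>s\<in>set (c # ys). finite (L s)"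
    "V \<inter> (set ys \<union> \<Union>(L ` set (c # ys))) = {}"
    "\<forall>s\<in>set (c # ys). L s \<inter> set (c # ys) = {}"
    "\<forall>s\<in>set (c # ys). \<forall>t\<in>set (c # ys). s \<noteq> t \<longrightarrow> L s \<inter> L t = {}"
  shows "\<exists>u. extendable_at (V \<union> set ys \<union> \<Union>(L ` set (c # ys)))
           (E \<union> path_edges (c # ys) \<union> leaf_edges (set (c # ys)) L) u"
  using assms
proof (induction ys arbitrary: c V E)
  case Nil
  then have "extendable_at (V \<union> L c) (E \<union> (\<lambda>l. {c, l}) ` L c) c"
    by (intro extendable_at_attach_leaves) auto
  then show ?case by (intro exI[of _ c]) (simp add: leaf_edges_insert)
next
  case (Cons y ys)
  have "extendable_at (V \<union> L c) (E \<union> (\<lambda>l. {c, l}) ` L c) c"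
    using Cons.prems by (intro extendable_at_attach_leaves) auto
  then have "odd_alpha_pair (insert y (V \<union> L c)) (insert {c, y} (E \<union> (\<lambda>l. {c, l}) ` L c)) c y"
    using Cons.prems by (intro extendable_at_attach) auto
  then have "extendable_at (insert y (V \<union> L c)) (insert {c, y} (E \<union> (\<lambda>l. {c, l}) ` L c)) y"
    by (rule odd_alpha_pair_extendable_at)
  then have "\<exists>u. extendable_at (insert y (V \<union> L c) \<union> set ys \<union> \<Union>(L ` set (y # ys)))
      (insert {c, y} (E \<union> (\<lambda>l. {c, l}) ` L c) \<union> path_edges (y # ys) \<union> leaf_edges (set (y # ys)) L) u"
  proof (rule Cons.IH)
    show "insert y (V \<union> L c) \<inter> (set ys \<union> \<Union>(L ` set (y # ys))) = {}"
      using Cons.prems(2,4,5,6) by auto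
  qed (use Cons.prems in auto)
  moreover have "insert y (V \<union> L c) \<union> set ys \<union> \<Union>(L ` set (y # ys))
      = V \<union> set (y # ys) \<union> \<Union>(L ` set (c # y # ys))"
    by auto
  moreover have "insert {c, y} (E \<union> (\<lambda>l. {c, l}) ` L c) \<union> path_edges (y # ys) \<union> leaf_edges (set (y # ys)) L
      = E \<union> path_edges (c # y # ys) \<union> leaf_edges (set (c # y # ys)) L"
    by (auto simp: path_edges_Cons_Cons leaf_edges_insert)
  ultimately show ?case by simp
qed

lemma simple_graph_edgeE:
  assumes "simple_graph V E" "e \<in> E"
  obtains x y where "e = {x, y}" "x \<noteq> y" "x \<in> V" "y \<in> V"
proof -
  have "e \<subseteq> V" "card e = 2" using assms unfolding simple_graph_def by auto
  then show thesis using that by (auto simp: card_2_iff)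
qed

lemma degree_one_edge_unique:
  assumes "degree E v = 1" "e \<in> E" "e' \<in> E" "v \<in> e" "v \<in> e'"
  shows "e = e'"
proof -
  obtain e0 where e0: "{e\<in>E. v \<in> e} = {e0}"
    using assms(1) unfolding degree_def by (rule card_1_singletonE)
  have "e \<in> {e\<in>E. v \<in> e}" "e' \<in> {e\<in>E. v \<in> e}" using assms(2-5) by simp_all
  then show ?thesis unfolding e0 by simp
qed

lemma degree_one_neighbour:
  assumes "simple_graph V E" "degree E v = 1"
  obtains w where "{v, w} \<in> E" "w \<noteq> v" "w \<in> V"
proof -
  obtain e where "{e\<in>E. v \<in> e} = {e}"
    using assms(2) unfolding degree_def by (rule card_1_singletonE)
  then have "e \<in> E" "v \<in> e" by auto
  moreover obtain x y where "e = {x, y}" "x \<noteq> y" "x \<in> V" "y \<in> V"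
    using simple_graph_edgeE[OF assms(1) \<open>e \<in> E\<close>] by blast
  ultimately consider "v = x" | "v = y" by blast
  then show thesis
  proof cases
    case 1
    then show thesis using that \<open>e \<in> E\<close> \<open>e = {x, y}\<close> \<open>x \<noteq> y\<close> \<open>y \<in> V\<close> by blast
  next
    case 2
    then show thesis using that \<open>e \<in> E\<close> \<open>e = {x, y}\<close> \<open>x \<noteq> y\<close> \<open>x \<in> V\<close>
      by (metis insert_commute)
  qed
qed

lemma reachable_closed:
  assumes "reachable E x y" "x \<in> A" "\<And>u v. u \<in> A \<Longrightarrow> adj E u v \<Longrightarrow> v \<in> A"
  shows "y \<in> A"
  using assms(1) unfolding reachable_def
proof (induction rule: rtrancl_induct)
  case base
  then show ?case using assms(2) .
next
  case (step u v)
  then show ?case using assms(3) by auto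
qed

lemma connected_graph_leaf_edge:
  assumes "connected_graph V E" "a \<in> V" "b \<in> V" "degree E a = 1" "degree E b = 1" "{a, b} \<in> E"
  shows "V = {a, b}"
proof -
  have closed: "v \<in> {a, b}" if "u \<in> {a, b}" "adj E u v" for u v
  proof -
    have "degree E u = 1" using that(1) assms(4,5) by blast
    then have "{u, v} = {a, b}"
      by (rule degree_one_edge_unique) (use that assms(6) in \<open>auto simp: adj_def\<close>)
    moreover have "v \<in> {u, v}" by simp
    ultimately show ?thesis by simp
  qed
  have "v \<in> {a, b}" if "v \<in> V" for v
  proof -
    have "reachable E a v" using assms(1,2) that unfolding connected_graph_def by blast
    then show ?thesis by (rule reachable_closed) (simp, rule closed)
  qed
  then show ?thesis using assms(2,3) by blast
qed

lemma connected_graph_leaf_neighbour: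
  assumes "simple_graph V E" "connected_graph V E" "l \<in> V" "degree E l = 1"
    "v \<in> V" "degree E v \<noteq> 1"
  obtains s where "{s, l} \<in> E" "s \<in> V" "degree E s \<noteq> 1"
proof -
  obtain w where w: "{l, w} \<in> E" "w \<noteq> l" "w \<in> V"
    using assms(4) by (rule degree_one_neighbour[OF assms(1)])
  have "degree E w \<noteq> 1"
  proof
    assume "degree E w = 1"
    then have "V = {l, w}"
      using w by (intro connected_graph_leaf_edge[OF assms(2,3) w(3) assms(4)])
    then show False using assms(4-6) \<open>degree E w = 1\<close> by auto
  qed
  then show thesis using that w by (simp add: insert_commute)
qed

lemma connected_graph_all_leaves:
  assumes "simple_graph V E" "connected_graph V E" "e \<in> E" "\<forall>v\<in>V. degree E v = 1"
  obtains a b where "a \<noteq> b" "V = {a, b}" "E = {{a, b}}"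
proof -
  obtain a b where ab: "e = {a, b}" "a \<noteq> b" "a \<in> V" "b \<in> V"
    by (rule simple_graph_edgeE[OF assms(1,3)])
  then have V: "V = {a, b}"
    using assms(3,4) by (intro connected_graph_leaf_edge[OF assms(2) ab(3,4)]) auto
  have "E \<subseteq> {{a, b}}"
  proof
    fix e' assume "e' \<in> E"
    then obtain x y where "e' = {x, y}" "x \<noteq> y" "x \<in> V" "y \<in> V"
      by (rule simple_graph_edgeE[OF assms(1)])
    then show "e' \<in> {{a, b}}" unfolding V by auto
  qed
  then have "E = {{a, b}}" using ab assms(3) by blast
  then show thesis using that ab(2) V by blast
qed

lemma edges_eq_inner_Un_legs:
  assumes "simple_graph V E" "\<forall>l\<in>V - S. degree E l = 1" "\<forall>l\<in>V - S. \<exists>s\<in>S. {s, l} \<in> E"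
  shows "E = {e\<in>E. e \<subseteq> S} \<union> leaf_edges S (\<lambda>s. {l \<in> V - S. {s, l} \<in> E})"
proof
  show "E \<subseteq> {e\<in>E. e \<subseteq> S} \<union> leaf_edges S (\<lambda>s. {l \<in> V - S. {s, l} \<in> E})"
  proof
    fix e assume "e \<in> E"
    show "e \<in> {e\<in>E. e \<subseteq> S} \<union> leaf_edges S (\<lambda>s. {l \<in> V - S. {s, l} \<in> E})"
    proof (cases "e \<subseteq> S")
      case True
      then show ?thesis using \<open>e \<in> E\<close> by blast
    next
      case False
      then obtain l where "l \<in> e" "l \<in> V - S"
        using simple_graph_edgeE[OF assms(1) \<open>e \<in> E\<close>] by blast
      moreover obtain s where "s \<in> S" "{s, l} \<in> E" using assms(3) calculation(2) by blast
      moreover have "degree E l = 1" using assms(2) calculation(2) by blast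
      ultimately have "e = {s, l}"
        using \<open>e \<in> E\<close> by (intro degree_one_edge_unique[of E l]) simp_all
      then show ?thesis
        using \<open>s \<in> S\<close> \<open>{s, l} \<in> E\<close> \<open>l \<in> V - S\<close> unfolding leaf_edges_def by blast
    qed
  qed
qed (auto simp: leaf_edges_def)

lemma legs_disjoint:
  assumes "\<forall>l\<in>V - S. degree E l = 1" "s \<in> S" "s \<noteq> t"
  shows "{l \<in> V - S. {s, l} \<in> E} \<inter> {l \<in> V - S. {t, l} \<in> E} = {}"
proof -
  have "l \<notin> V - S" if "{s, l} \<in> E" "{t, l} \<in> E" for l
  proof
    assume "l \<in> V - S"
    then have "{s, l} = {t, l}"
      using assms(1) that by (intro degree_one_edge_unique[of E l]) simp_all
    moreover have "s \<noteq> l" using assms(2) \<open>l \<in> V - S\<close> by blast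
    ultimately show False using assms(3) by (simp add: doubleton_eq_iff)
  qed
  then show ?thesis by blast
qed

lemma caterpillar_spineE:
  assumes "caterpillar V E" "E \<noteq> {}"
  obtains xs L where "xs \<noteq> []" "distinct xs" "\<forall>s\<in>set xs. finite (L s)"
    "V = set xs \<union> \<Union>(L ` set xs)" "E = path_edges xs \<union> leaf_edges (set xs) L"
    "\<forall>s\<in>set xs. L s \<inter> set xs = {}" "\<forall>s\<in>set xs. \<forall>t\<in>set xs. s \<noteq> t \<longrightarrow> L s \<inter> L t = {}"
proof -
  have sg: "simple_graph V E" and con: "connected_graph V E"
    using assms(1) unfolding caterpillar_def tree_def forest_def by auto
  define S where "S = {v\<in>V. degree E v \<noteq> 1}"
  have "path_graph S {e\<in>E. e \<subseteq> S}"
    using assms(1) unfolding caterpillar_def remove_leaves_def S_def Let_def by simp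
  then obtain xs where xs: "distinct xs" "set xs = S" "{e\<in>E. e \<subseteq> S} = path_edges xs"
    unfolding path_graph_def path_edges_def by blast
  obtain e where "e \<in> E" using assms(2) by blast
  show thesis
  proof (cases "S = {}")
    case True
    obtain a b where "a \<noteq> b" "V = {a, b}" "E = {{a, b}}"
      by (rule connected_graph_all_leaves[OF sg con \<open>e \<in> E\<close>]) (use True in \<open>auto simp: S_def\<close>)
    \<comment> \<open>the single edge \<open>{a, b}\<close> is read as the spine \<open>[a]\<close> with the leg \<open>b\<close>\<close>
    then show thesis
      using that[of "[a]" "\<lambda>_. {b}"] by (simp add: leaf_edges_def insert_commute)
  next
    case False
    define L where "L = (\<lambda>s. {l \<in> V - S. {s, l} \<in> E})"
    have legs: "\<forall>l\<in>V - S. \<exists>s\<in>S. {s, l} \<in> E"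
    proof
      fix l assume "l \<in> V - S"
      obtain v where "v \<in> S" using False by blast
      obtain s where "{s, l} \<in> E" "s \<in> V" "degree E s \<noteq> 1"
        by (rule connected_graph_leaf_neighbour[OF sg con, of l v])
          (use \<open>l \<in> V - S\<close> \<open>v \<in> S\<close> in \<open>simp_all add: S_def\<close>)
      then show "\<exists>s\<in>S. {s, l} \<in> E" unfolding S_def by blast
    qed
    have "\<forall>l\<in>V - S. degree E l = 1" unfolding S_def by blast
    then have E: "E = path_edges xs \<union> leaf_edges (set xs) L"
      unfolding xs(2) xs(3)[symmetric] L_def by (rule edges_eq_inner_Un_legs[OF sg _ legs])
    have V: "V = set xs \<union> \<Union>(L ` set xs)"
      using legs xs(2) unfolding L_def S_def by auto
    show thesis
    proof (rule that[OF _ xs(1) _ V E])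
      show "xs \<noteq> []" using xs(2) False by auto
      show "\<forall>s\<in>set xs. finite (L s)"
        using sg unfolding simple_graph_def L_def by auto
      show "\<forall>s\<in>set xs. L s \<inter> set xs = {}" unfolding xs(2) L_def by blast
      show "\<forall>s\<in>set xs. \<forall>t\<in>set xs. s \<noteq> t \<longrightarrow> L s \<inter> L t = {}"
        using legs_disjoint[OF \<open>\<forall>l\<in>V - S. degree E l = 1\<close>] unfolding xs(2) L_def by blast
    qed
  qed
qed

lemma caterpillar_odd_alpha_pair:
  assumes "caterpillar V E" "E \<noteq> {}"
  obtains a b where "odd_alpha_pair V E a b"
proof -
  obtain xs L where xs: "xs \<noteq> []" "distinct xs" "\<forall>s\<in>set xs. finite (L s)"
    "V = set xs \<union> \<Union>(L ` set xs)" "E = path_edges xs \<union> leaf_edges (set xs) L"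
    "\<forall>s\<in>set xs. L s \<inter> set xs = {}" "\<forall>s\<in>set xs. \<forall>t\<in>set xs. s \<noteq> t \<longrightarrow> L s \<inter> L t = {}"
    by (rule caterpillar_spineE[OF assms])
  then obtain c ys where c: "xs = c # ys" by (cases xs) auto
  have "extendable_at {c} {} c" unfolding extendable_at_def by simp
  then have "\<exists>u. extendable_at ({c} \<union> set ys \<union> \<Union>(L ` set xs))
      ({} \<union> path_edges xs \<union> leaf_edges (set xs) L) u"
    using xs(2,3,6,7) unfolding c by (intro extendable_at_spine) auto
  then obtain u where "extendable_at V E u" using xs(4,5) c by auto
  then show thesis using that assms(2) unfolding extendable_at_def by blast
qed

section \<open>Forests\<close>

lemma odd_graceful_Un:
  assumes "odd_alpha_pair C EC a b" "odd_graceful R ER" "C \<inter> R = {}" "\<forall>e\<in>ER. e \<subseteq> R"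
    "finite ER"
  shows "odd_graceful (C \<union> R) (EC \<union> ER)"
proof -
  obtain f l where fin: "finite EC" and sub: "\<forall>e\<in>EC. e \<subseteq> C" and "b \<in> C"
    and inj: "inj_on f C" and rng: "f ` C \<subseteq> {0..<2 * card EC}"
    and w: "edge_weights f EC = {k. odd k \<and> k < 2 * card EC}" and sep: "separated_at EC f l"
    and fb: "f b = Suc l"
    using assms(1) unfolding odd_alpha_pair_def odd_graceful_labelling_def by blast
  obtain g where g_inj: "inj_on g R" and g_rng: "g ` R \<subseteq> {0..<2 * card ER}"
    and g_w: "edge_weights g ER = {k. odd k \<and> k < 2 * card ER}"
    using assms(2) unfolding odd_graceful_iff_labelling odd_graceful_labelling_def by blast
  define m where "m = card EC"
  define n where "n = card ER"
  define h where "h = (\<lambda>v. if v \<in> C then (if f v \<le> l then f v else f v + 2 * n) else g v + Suc l)"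
  have "l < 2 * m" using rng \<open>b \<in> C\<close> fb unfolding m_def by auto
  have "EC \<inter> ER = {}"
    using sub assms(3,4) sep unfolding separated_at_def by fastforce
  then have card: "card (EC \<union> ER) = m + n"
    unfolding m_def n_def using fin assms(5) by (simp add: card_Un_disjoint)
  have "inj_on h (C \<union> R)"
  proof (rule inj_onI)
    fix u v assume uv: "u \<in> C \<union> R" "v \<in> C \<union> R" "h u = h v"
    have g_below: "g v < 2 * n" if "v \<in> R" for v using g_rng that unfolding n_def by auto
    show "u = v"
      using uv inj g_inj assms(3) g_below[of u] g_below[of v] unfolding h_def inj_on_def
      by (auto split: if_splits)
  qed
  moreover have "h ` (C \<union> R) \<subseteq> {0..<2 * card (EC \<union> ER)}"
    using rng g_rng \<open>l < 2 * m\<close> assms(3) unfolding card h_def m_def n_def by (auto split: if_splits)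
  moreover have "edge_weights h (EC \<union> ER) = {k. odd k \<and> k < 2 * card (EC \<union> ER)}"
  proof -
    have "edge_weights h EC = edge_weights (\<lambda>v. if f v \<le> l then f v else f v + 2 * n) EC"
      using sub by (intro edge_weights_cong[of EC C]) (auto simp: h_def)
    also have "\<dots> = (\<lambda>w. w + 2 * n) ` {k. odd k \<and> k < 2 * m}"
      using edge_weights_raise[OF sep] w unfolding m_def by simp
    finally have weights_C: "edge_weights h EC = \<dots>" .
    have "edge_weights h ER = edge_weights (\<lambda>v. g v + Suc l) ER"
      using assms(3,4) by (intro edge_weights_cong[of ER R]) (auto simp: h_def)
    then have weights_R: "edge_weights h ER = {k. odd k \<and> k < 2 * n}"
      using g_w unfolding n_def edge_weights_add_const by simp
    show ?thesis unfolding edge_weights_Un weights_C weights_R card odds_shift_Un ..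
  qed
  ultimately show ?thesis unfolding odd_graceful_iff_labelling odd_graceful_labelling_def by blast
qed

lemma reachable_mono: "E' \<subseteq> E \<Longrightarrow> reachable E' u v \<Longrightarrow> reachable E u v"
  unfolding reachable_def adj_def by (erule rtrancl_mono[THEN subsetD, rotated]) auto

lemma reachable_induced_edges:
  assumes "reachable E u v" "u \<in> A" "\<And>x y. x \<in> A \<Longrightarrow> adj E x y \<Longrightarrow> y \<in> A"
  shows "reachable (induced_edges E A) u v"
  using assms(1) unfolding reachable_def
proof (induction rule: rtrancl_induct)
  case base
  show ?case by simp
next
  case (step x y)
  have "x \<in> A"
    using step.hyps(1) assms(2,3) by (rule reachable_closed[unfolded reachable_def])
  then have "adj (induced_edges E A) x y"
    using step.hyps(2) assms(3) unfolding adj_def induced_edges_def by auto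
  then show ?case using step.IH by (simp add: rtrancl_into_rtrancl)
qed

lemma adj_in_vertices:
  assumes "simple_graph V E" "adj E u w"
  shows "w \<in> V"
  using assms unfolding simple_graph_def adj_def by blast

lemma component_adj_closed:
  assumes "simple_graph V E" "u \<in> component V E v" "adj E u w"
  shows "w \<in> component V E v"
proof -
  have "reachable E v u" using assms(2) unfolding component_def by simp
  then have "reachable E v w" using assms(3) unfolding reachable_def by (simp add: rtrancl_into_rtrancl)
  then show ?thesis using adj_in_vertices[OF assms(1,3)] unfolding component_def by simp
qed

lemma component_complement_adj_closed:
  assumes "simple_graph V E" "u \<in> V - component V E v" "adj E u w"
  shows "w \<in> V - component V E v"
proof -
  have "adj E w u" using assms(3) unfolding adj_def by (simp add: insert_commute)
  then have "w \<notin> component V E v" using assms(2) component_adj_closed[OF assms(1)] by blast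
  then show ?thesis using adj_in_vertices[OF assms(1,3)] by simp
qed

lemma component_induced_edges:
  assumes "A \<subseteq> V" "u \<in> A" "\<And>x y. x \<in> A \<Longrightarrow> adj E x y \<Longrightarrow> y \<in> A"
  shows "component A (induced_edges E A) u = component V E u"
proof -
  have "reachable (induced_edges E A) u w" if "reachable E u w" for w
    using that assms(2,3) by (rule reachable_induced_edges)
  moreover have "reachable E u w" if "reachable (induced_edges E A) u w" for w
    using reachable_mono[OF _ that] unfolding induced_edges_def by blast
  moreover have "w \<in> A" if "reachable E u w" for w
    using reachable_closed[OF that assms(2,3)] .
  ultimately show ?thesis using assms(1) unfolding component_def by blast
qed

lemma edges_split_component:
  assumes "simple_graph V E"
  shows "E = induced_edges E (component V E v) \<union> induced_edges E (V - component V E v)"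
proof -
  have "e \<subseteq> component V E v \<or> e \<subseteq> V - component V E v" if e: "e \<in> E" for e
  proof -
    obtain x y where "e = {x, y}" "x \<in> V" "y \<in> V"
      using simple_graph_edgeE[OF assms e] by blast
    moreover have "adj E x y" "adj E y x"
      using e calculation(1) unfolding adj_def by (simp_all add: insert_commute)
    ultimately show ?thesis
      using component_adj_closed[OF assms] by blast
  qed
  then show ?thesis unfolding induced_edges_def by blast
qed

lemma simple_graph_induced_edges:
  assumes "simple_graph V E" "A \<subseteq> V"
  shows "simple_graph A (induced_edges E A)"
  using assms finite_subset unfolding simple_graph_def induced_edges_def by blast

lemma induced_edges_induced_edges:
  "B \<subseteq> A \<Longrightarrow> induced_edges (induced_edges E A) B = induced_edges E B"
  unfolding induced_edges_def by blast

lemma simple_graph_finite_edges: "simple_graph V E \<Longrightarrow> finite E"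
  unfolding simple_graph_def by (meson Pow_iff finite_Pow_iff rev_finite_subset subsetI)

lemma odd_graceful_componentwise:
  assumes "simple_graph V E"
    "\<forall>v\<in>V. \<exists>a b. odd_alpha_pair (component V E v) (induced_edges E (component V E v)) a b"
  shows "odd_graceful V E"
  using assms
proof (induction "card V" arbitrary: V E rule: less_induct)
  case less
  show ?case
  proof (cases "V = {}")
    case True
    then have "E = {}" using less.prems(1) unfolding simple_graph_def by fastforce
    then show ?thesis using True unfolding odd_graceful_def by simp
  next
    case False
    then obtain v where "v \<in> V" by blast
    define C where "C = component V E v"
    define R where "R = V - C"
    have "v \<in> C" using \<open>v \<in> V\<close> unfolding C_def component_def reachable_def by simp
    have "C \<subseteq> V" unfolding C_def component_def by blast
    have closed: "y \<in> R" if "x \<in> R" "adj E x y" for x y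
      using that unfolding R_def C_def by (rule component_complement_adj_closed[OF less.prems(1)])
    have components: "component R (induced_edges E R) u = component V E u" if "u \<in> R" for u
      by (rule component_induced_edges[OF _ that closed]) (simp add: R_def)
    have "odd_graceful R (induced_edges E R)"
    proof (rule less.hyps)
      have "finite V" using less.prems(1) unfolding simple_graph_def by simp
      then show "card R < card V"
        using \<open>v \<in> V\<close> \<open>v \<in> C\<close> unfolding R_def by (intro psubset_card_mono) blast+
      show "simple_graph R (induced_edges E R)"
        using less.prems(1) unfolding R_def by (rule simple_graph_induced_edges) blast
      have "\<exists>a b. odd_alpha_pair (component R (induced_edges E R) u)
          (induced_edges (induced_edges E R) (component R (induced_edges E R) u)) a b" if "u \<in> R" for u
      proof -
        have "component V E u \<subseteq> R" using components[OF that] unfolding component_def by blast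
        then have "induced_edges (induced_edges E R) (component V E u) = induced_edges E (component V E u)"
          by (rule induced_edges_induced_edges)
        then show ?thesis using less.prems(2) that components[OF that] unfolding R_def by auto
      qed
      then show "\<forall>u\<in>R. \<exists>a b. odd_alpha_pair (component R (induced_edges E R) u)
          (induced_edges (induced_edges E R) (component R (induced_edges E R) u)) a b" by blast
    qed
    moreover obtain a b where "odd_alpha_pair C (induced_edges E C) a b"
      using less.prems(2) \<open>v \<in> V\<close> unfolding C_def by blast
    ultimately have "odd_graceful (C \<union> R) (induced_edges E C \<union> induced_edges E R)"
      using simple_graph_finite_edges[OF less.prems(1)]
      by (intro odd_graceful_Un) (auto simp: R_def induced_edges_def)
    moreover have "C \<union> R = V" using \<open>C \<subseteq> V\<close> unfolding R_def by blast
    ultimately show ?thesis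
      using edges_split_component[OF less.prems(1), of v] unfolding R_def C_def by simp
  qed
qed

theorem theorem2:
  fixes V :: "'a set" and E :: "'a set set"
  assumes "forest V E"
    and "\<forall>v\<in>V. caterpillar (component V E v) (induced_edges E (component V E v))
                \<and> induced_edges E (component V E v) \<noteq> {}"
  shows "odd_graceful V E"
proof (rule odd_graceful_componentwise)
  show "simple_graph V E" using assms(1) unfolding forest_def by simp
  show "\<forall>v\<in>V. \<exists>a b. odd_alpha_pair (component V E v) (induced_edges E (component V E v)) a b"
    using assms(2) caterpillar_odd_alpha_pair by metis
qed

end
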